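(* Let $m$ be a positive integer, let $\delta\in\mathbb{F}_{2^{3m}}$ be fixed and let $c\in\mathbb{F}_{2^m}^*$. Then the polynomial \[ f(x)=(x^{2^m}+x+\delta)^{2^{2m}+1}+cx \] is a permutation polynomial of $\mathbb{F}_{2^{3m}}$.
   Context: A polynomial $f\in\mathbb{F}_Q[x]$ is a permutation polynomial of $\mathbb{F}_Q$ if the map $c\mapsto f(c)$ is a bijection of $\mathbb{F}_Q$. $\mathbb{F}_{2^m}$ is viewed as the subfield of $\mathbb{F}_{2^{3m}}$. *)

theory Defs
  imports "HOL-Computational_Algebra.Polynomial"
begin

definition permutation_polynomial :: "'a::{field,finite} poly \<Rightarrow> bool" where
  "permutation_polynomial f \<longleftrightarrow> bij (poly f)"

definition subfield_of_order :: "nat \<Rightarrow> 'a::field set" where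
  "subfield_of_order q = {x. x ^ q = x}"

end

theory Submission
  imports Defs
begin

text \<open>Put q = 2^m and A(x) = x^q + x + \<delta>, so that f(x) = A^(q^2) A + c x. As c^q = c and the
  Frobenius x \<mapsto> x^q has order 3, the sum f(x) + f(x)^q = A (A^q + A^(q^2) + c) + c \<delta> depends on x
  only through A. If f(x) = f(y), then w = A(x) + A(y) = (x + y)^q + (x + y) has trace
  w + w^q + w^(q^2) = 0, and comparing the two products gives w (w + A + A^q + A^(q^2) + c) = 0.
  A nonzero w would thus be fixed by the Frobenius, making its trace 3w = w nonzero. Hence
  A(x) = A(y), and then c x = c y.\<close>

lemma of_nat_card_UNIV_eq_0: "of_nat (card (UNIV :: 'a::{ring_1,finite} set)) = (0::'a)"
proof -
  have shift: "bij (\<lambda>y::'a. y + 1)"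
    by (rule bij_betw_byWitness[where f'="\<lambda>y. y - 1"]) auto
  have "(\<Sum>y\<in>UNIV. y) + of_nat (card (UNIV :: 'a set)) = (\<Sum>y\<in>UNIV. y + (1::'a))"
    by (simp add: sum.distrib)
  also have "\<dots> = (\<Sum>y\<in>UNIV. y)"
    using sum.reindex_bij_betw[OF shift, of "\<lambda>y. y"] by simp
  finally show ?thesis by simp
qed

lemma CHAR_eq_2_if_card_eq_power_2:
  assumes "card (UNIV :: 'a::{idom,finite} set) = 2 ^ n"
  shows "CHAR('a) = 2"
proof -
  have "prime CHAR('a)"
    by (intro prime_CHAR_semidom finite_imp_CHAR_pos finite_UNIV)
  moreover have "CHAR('a) dvd 2 ^ n"
    unfolding of_nat_eq_0_iff_char_dvd[symmetric] using of_nat_card_UNIV_eq_0[where 'a='a]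
    by (simp only: assms)
  ultimately show ?thesis
    using prime_dvd_power primes_dvd_imp_eq two_is_prime_nat by blast
qed

lemma power_card_UNIV_eq_self:
  fixes x :: "'a::{field,finite}"
  shows "x ^ card (UNIV :: 'a set) = x"
proof (cases "x = 0")
  case False
  let ?S = "UNIV - {0::'a}"
  have "(\<Prod>y\<in>?S. y) = (\<Prod>y\<in>?S. x * y)"
    by (rule prod.reindex_bij_witness[of _ "\<lambda>y. x * y" "\<lambda>y. y / x"]) (use False in auto)
  also have "\<dots> = x ^ card ?S * (\<Prod>y\<in>?S. y)"
    by (simp add: prod.distrib)
  finally have "x ^ card ?S = 1"
    by simp
  moreover have "card (UNIV :: 'a set) = Suc (card ?S)"
    using finite_UNIV_card_ge_0[where 'a='a] by (simp add: card_Diff_singleton)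
  ultimately show ?thesis
    by (simp only: power_Suc2 mult_1)
qed (simp add: finite_UNIV_card_ge_0)

lemma add_power_CHAR_2:
  fixes x y :: "'a::comm_semiring_1"
  assumes "CHAR('a) = 2" and "q = 2 ^ m"
  shows "(x + y) ^ q = x ^ q + y ^ q"
  using assms by (intro freshmans_dream') simp_all

lemma add_self_CHAR_2:
  fixes x :: "'a::ring_1"
  assumes "CHAR('a) = 2"
  shows "x + x = 0"
  using uminus_CHAR_2[OF assms, of x] by (metis add.right_inverse)

definition cubic_trace :: "nat \<Rightarrow> 'a::comm_semiring_1 \<Rightarrow> 'a" where
  "cubic_trace q w = w + w ^ q + w ^ (q ^ 2)"

lemma cubic_trace_eq_self_if_fixed:
  fixes w :: "'a::comm_ring_1"
  assumes "CHAR('a) = 2" and "w ^ q = w"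
  shows "cubic_trace q w = w"
proof -
  have "w ^ (q ^ 2) = (w ^ q) ^ q"
    by (simp add: power2_eq_square power_mult)
  then show ?thesis
    using assms add_self_CHAR_2[OF assms(1), of w] by (simp add: cubic_trace_def)
qed

context
  fixes q m :: nat
  assumes CHAR_2: "CHAR('a::field) = 2"
    and q_eq: "q = 2 ^ m"
    and power_q_cube: "\<And>y::'a. y ^ (q ^ 3) = y"
begin

lemma add_power_q: "((x::'a) + y) ^ q = x ^ q + y ^ q"
  using add_power_CHAR_2[OF CHAR_2 q_eq] .

lemma add_power_q2: "((x::'a) + y) ^ (q ^ 2) = x ^ (q ^ 2) + y ^ (q ^ 2)"
  by (rule add_power_CHAR_2[OF CHAR_2, of _ "2 * m"]) (simp add: q_eq power_mult[symmetric] mult.commute)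

lemma power_q_power_q: "((x::'a) ^ q) ^ q = x ^ (q ^ 2)"
  by (simp add: power2_eq_square power_mult)

lemma power_q2_power_q: "((x::'a) ^ (q ^ 2)) ^ q = x"
  using power_q_cube[of x] by (simp add: power_mult[symmetric] power3_eq_cube power2_eq_square)

lemma power_q_power_q2: "((x::'a) ^ q) ^ (q ^ 2) = x"
  using power_q_cube[of x] by (simp add: power_mult[symmetric] power3_eq_cube power2_eq_square mult.assoc)

lemma cubic_trace_power_q_add_self: "cubic_trace q ((u::'a) ^ q + u) = 0"
proof -
  have "cubic_trace q (u ^ q + u) = (u + u) + (u ^ q + u ^ q) + (u ^ (q ^ 2) + u ^ (q ^ 2))"
    by (simp add: cubic_trace_def add_power_q add_power_q2 power_q_power_q power_q_power_q2 ac_simps)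
  then show ?thesis
    by (simp add: add_self_CHAR_2[OF CHAR_2])
qed

lemma eq_if_frobenius_product_eq:
  fixes a b c :: 'a
  assumes c_fixed: "c ^ q = c"
    and product_eq: "a * (a ^ q + a ^ (q ^ 2) + c) = b * (b ^ q + b ^ (q ^ 2) + c)"
    and trace_zero: "cubic_trace q (a + b) = 0"
  shows "a = b"
proof -
  define w where "w = a + b"
  have b_eq: "b = a + w"
    using add_self_CHAR_2[OF CHAR_2, of a] by (simp add: w_def flip: add.assoc)
  have w_frob: "w ^ q + w ^ (q ^ 2) = w"
    using trace_zero uminus_CHAR_2[OF CHAR_2, of w]
    by (simp add: cubic_trace_def w_def[symmetric] add.assoc add_eq_0_iff)
  define s where "s = a + a ^ q + a ^ (q ^ 2) + c"
  have "b ^ q + b ^ (q ^ 2) + c = a ^ q + a ^ (q ^ 2) + c + (w ^ q + w ^ (q ^ 2))"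
    unfolding b_eq add_power_q add_power_q2 by (simp add: ac_simps)
  then have "b * (b ^ q + b ^ (q ^ 2) + c) = (a + w) * (a ^ q + a ^ (q ^ 2) + c + w)"
    by (simp only: w_frob flip: b_eq)
  also have "\<dots> = a * (a ^ q + a ^ (q ^ 2) + c) + w * (w + s)"
    by (simp add: s_def algebra_simps)
  finally have "w * (w + s) = 0"
    using product_eq by simp
  have "w = 0"
  proof (rule ccontr)
    assume "w \<noteq> 0"
    with \<open>w * (w + s) = 0\<close> have "w = s"
      using uminus_CHAR_2[OF CHAR_2, of s] by (simp add: add_eq_0_iff)
    moreover have "s ^ q = s"
      by (simp add: s_def add_power_q power_q_power_q power_q2_power_q c_fixed ac_simps)
    ultimately have "cubic_trace q w = w"
      by (simp add: cubic_trace_eq_self_if_fixed[OF CHAR_2])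
    with \<open>w \<noteq> 0\<close> show False
      using trace_zero by (simp add: w_def)
  qed
  then show ?thesis
    using b_eq by simp
qed

lemma value_add_value_power_q:
  fixes x \<delta> c :: 'a
  assumes c_fixed: "c ^ q = c"
    and A_def: "A = x ^ q + x + \<delta>"
  shows "(A ^ (q ^ 2 + 1) + c * x) + (A ^ (q ^ 2 + 1) + c * x) ^ q
           = A * (A ^ q + A ^ (q ^ 2) + c) + c * \<delta>"
proof -
  have "(A ^ (q ^ 2 + 1) + c * x) ^ q = A * A ^ q + c * x ^ q"
    by (simp add: add_power_q power_mult_distrib power_q2_power_q c_fixed)
  then have "(A ^ (q ^ 2 + 1) + c * x) + (A ^ (q ^ 2 + 1) + c * x) ^ q
               = A * (A ^ q + A ^ (q ^ 2)) + c * (x ^ q + x)"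
    by (simp add: algebra_simps)
  also have "x ^ q + x = A + \<delta>"
    using add_self_CHAR_2[OF CHAR_2, of \<delta>] by (simp add: A_def add.assoc)
  finally show ?thesis
    by (simp add: algebra_simps)
qed

lemma inj_power_q_trinomial_plus_linear:
  fixes \<delta> c :: 'a
  assumes c_fixed: "c ^ q = c" and "c \<noteq> 0"
  shows "inj (\<lambda>x. (x ^ q + x + \<delta>) ^ (q ^ 2 + 1) + c * x)"
proof (rule injI)
  fix x y :: 'a
  define A where "A z = z ^ q + z + \<delta>" for z
  assume "(x ^ q + x + \<delta>) ^ (q ^ 2 + 1) + c * x = (y ^ q + y + \<delta>) ^ (q ^ 2 + 1) + c * y"
  then have f_eq: "A x ^ (q ^ 2 + 1) + c * x = A y ^ (q ^ 2 + 1) + c * y"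
    by (simp add: A_def)
  have "A x * (A x ^ q + A x ^ (q ^ 2) + c) + c * \<delta> = A y * (A y ^ q + A y ^ (q ^ 2) + c) + c * \<delta>"
    using value_add_value_power_q[OF c_fixed A_def] f_eq by metis
  then have "A x * (A x ^ q + A x ^ (q ^ 2) + c) = A y * (A y ^ q + A y ^ (q ^ 2) + c)"
    by simp
  moreover have "A x + A y = (x + y) ^ q + (x + y)"
    using add_self_CHAR_2[OF CHAR_2, of \<delta>] by (simp add: A_def add_power_q ac_simps)
  then have "cubic_trace q (A x + A y) = 0"
    by (simp add: cubic_trace_power_q_add_self)
  ultimately have "A x = A y"
    by (rule eq_if_frobenius_product_eq[OF c_fixed])
  then show "x = y"
    using f_eq \<open>c \<noteq> 0\<close> by simp
qed

end

theorem proposition1: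
  fixes m :: nat and \<delta> c :: "'a::{field,finite}"
  assumes "m > 0"
    and "card (UNIV :: 'a set) = 2 ^ (3 * m)"
    and "c \<in> subfield_of_order (2 ^ m)" and "c \<noteq> 0"
  shows "permutation_polynomial
           (([:\<delta>, 1:] + monom 1 (2 ^ m)) ^ (2 ^ (2 * m) + 1) + [:0, c:])"
proof -
  define q :: nat where "q = 2 ^ m"
  have char: "CHAR('a) = 2"
    using CHAR_eq_2_if_card_eq_power_2 assms(2) .
  have "card (UNIV :: 'a set) = q ^ 3"
    using assms(2) by (simp add: q_def power_mult[symmetric] mult.commute)
  then have cube: "y ^ (q ^ 3) = y" for y :: 'a
    using power_card_UNIV_eq_self by metis
  have c_fixed: "c ^ q = c"
    using assms(3) by (simp add: subfield_of_order_def q_def)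
  have "poly (([:\<delta>, 1:] + monom 1 (2 ^ m)) ^ (2 ^ (2 * m) + 1) + [:0, c:])
          = (\<lambda>x. (x ^ q + x + \<delta>) ^ (q ^ 2 + 1) + c * x)"
    by (simp add: fun_eq_iff poly_monom q_def power_mult[symmetric] mult.commute algebra_simps)
  moreover have "inj (\<lambda>x. (x ^ q + x + \<delta>) ^ (q ^ 2 + 1) + c * x)"
    using inj_power_q_trinomial_plus_linear[OF char q_def cube c_fixed \<open>c \<noteq> 0\<close>] .
  ultimately show ?thesis
    unfolding permutation_polynomial_def bij_def by (simp add: finite_UNIV_inj_surj)
qed

end
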